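(* If a dual-convex $m\times n$ net in $I^3$ is infinitesimally flexible in $I^3$, then it has a nontrivial infinitesimal isotropic isometric deformation consisting of isotropic vectors (vectors parallel to the $z$-axis).
   Context: $I^3$ is $\mathbb{R}^3$ with coordinates $(x,y,z)$; isotropic = parallel to the $z$-axis; top view $\overline P$ of $P=(x,y,z)$ is $(x,y)$. Metric duality: point $P=(P^1,P^2,P^3)\leftrightarrow$ plane $P^*\colon z=P^1x+P^2y-P^3$. Infinitesimal isotropic congruence: vector field $V(\mathbf x)=a\mathbf x+\mathbf b$, $\mathbf b\in\mathbb R^3$, $a=\begin{pmatrix}0&-\phi&0\\ \phi&0&0\\ c_1&c_2&0\end{pmatrix}$. An $m\times n$ net: points $F_{ij}$, $0\le i\le m,0\le j\le n$, with $F_{ij},F_{i+1,j},F_{i+1,j+1},F_{i,j+1}$ consecutive vertices of a convex planar quadrilateral (face $p_{ij}$) for all $0\le i<m,0\le j<n$. Boundary vertices: $i\in\{0,m\}$ or $j\in\{0,n\}$; consecutive faces around non-boundary $F_{ij}$: $p_{i-1,j-1},p_{i,j-1},p_{ij},p_{i-1,j}$. Convex 4-hedral angle with vertex $O$: union of rays from $O$ meeting a convex quadrilateral in a plane not through $O$; flat angles: rays through one side; admissible: isotropic line through $O$ meets its interior. Dual-convex: $m,n\ge2$ and at each non-boundary vertex the four consecutive face planes are planes of four consecutive flat angles of an admissible convex 4-hedral angle. Curvature at non-boundary vertex with consecutive faces $p_1..p_4$: $\Omega=\frac12\sum_{k=1}^4\det(\overline{p_k^*},\overline{p_{k+1}^*})$,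 $p_5=p_1$. An infinitesimal isotropic isometric deformation of a dual-convex net $F_{ij}$ is a collection $V_{ij}\in\mathbb R^3$ such that (face condition) for each face $p_{kl}$ there is an infinitesimal isotropic congruence $V$ with $V_{ij}=V(F_{ij})$ at its four vertices, and (vertex condition) $\frac{d}{dt}\Omega(F_{ij}+tV_{ij})|_{t=0}=0$ for each non-boundary vertex. It is trivial if one infinitesimal isotropic congruence $V$ satisfies $V_{ij}=V(F_{ij})$ for all $i,j$. The net is infinitesimally flexible in $I^3$ if it has a nontrivial one. *)

theory Defs
  imports "HOL-Analysis.Analysis"
begin

type_synonym pt = "real ^ 3"

text \<open>Points of I^3 are vectors in real^3 with components x = P$1, y = P$2, z = P$3.
  The isotropic direction is the z-axis.\<close>

definition e3 :: pt where
  "e3 = vector [0, 0, 1]"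

definition inf_iso_congruence :: "(pt \<Rightarrow> pt) \<Rightarrow> bool" where
  "inf_iso_congruence V \<longleftrightarrow>
     (\<exists>\<phi> c1 c2 (b::pt). \<forall>x.
        V x = vector [- \<phi> * x$2, \<phi> * x$1, c1 * x$1 + c2 * x$2] + b)"

definition convex_quad :: "pt \<Rightarrow> pt \<Rightarrow> pt \<Rightarrow> pt \<Rightarrow> bool" where
  "convex_quad A B C D \<longleftrightarrow>
     \<not> collinear {A, B, C, D} \<and> open_segment A C \<inter> open_segment B D \<noteq> {}"

text \<open>An m x n net; only the indices 0..m, 0..n matter.\<close>
definition is_net :: "nat \<Rightarrow> nat \<Rightarrow> (nat \<Rightarrow> nat \<Rightarrow> pt) \<Rightarrow> bool" where
  "is_net m n F \<longleftrightarrow>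
     (\<forall>i<m. \<forall>j<n. convex_quad (F i j) (F (Suc i) j) (F (Suc i) (Suc j)) (F i (Suc j)))"

definition face_vertices :: "(nat \<Rightarrow> nat \<Rightarrow> pt) \<Rightarrow> nat \<Rightarrow> nat \<Rightarrow> pt set" where
  "face_vertices F i j = {F i j, F (Suc i) j, F (Suc i) (Suc j), F i (Suc j)}"

definition face_plane :: "(nat \<Rightarrow> nat \<Rightarrow> pt) \<Rightarrow> nat \<Rightarrow> nat \<Rightarrow> pt set" where
  "face_plane F i j = affine hull (face_vertices F i j)"

definition hedral_angle :: "pt \<Rightarrow> pt \<Rightarrow> pt \<Rightarrow> pt \<Rightarrow> pt \<Rightarrow> pt set" where
  "hedral_angle Ov A B C D =
     {Ov + t *\<^sub>R (x - Ov) | t x. t \<ge> 0 \<and> x \<in> convex hull {A, B, C, D}}"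

definition admissible_convex_4hedral :: "pt \<Rightarrow> pt \<Rightarrow> pt \<Rightarrow> pt \<Rightarrow> pt \<Rightarrow> bool" where
  "admissible_convex_4hedral Ov A B C D \<longleftrightarrow>
     convex_quad A B C D \<and> Ov \<notin> affine hull {A, B, C, D} \<and>
     (\<exists>s. Ov + s *\<^sub>R e3 \<in> interior (hedral_angle Ov A B C D))"

text \<open>Arbitrary starting side and orientation are covered by relabelling A,B,C,D.\<close>
definition dual_convex :: "nat \<Rightarrow> nat \<Rightarrow> (nat \<Rightarrow> nat \<Rightarrow> pt) \<Rightarrow> bool" where
  "dual_convex m n F \<longleftrightarrow> 2 \<le> m \<and> 2 \<le> n \<and> is_net m n F \<and>
     (\<forall>i j. 0 < i \<and> i < m \<and> 0 < j \<and> j < n \<longrightarrow>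
        (\<exists>A B C D. admissible_convex_4hedral (F i j) A B C D \<and>
           face_plane F (i - 1) (j - 1) = affine hull {F i j, A, B} \<and>
           face_plane F i (j - 1) = affine hull {F i j, B, C} \<and>
           face_plane F i j = affine hull {F i j, C, D} \<and>
           face_plane F (i - 1) j = affine hull {F i j, D, A}))"

text \<open>Top view of the dual point p^* of the (non-isotropic) face plane z = a x + b y + c
  of p_ij: p^* = (a, b, -c), so its top view is (a, b).\<close>
definition face_dual_top :: "(nat \<Rightarrow> nat \<Rightarrow> pt) \<Rightarrow> nat \<Rightarrow> nat \<Rightarrow> real \<times> real" where
  "face_dual_top F i j =
     (THE s. \<exists>c. \<forall>P \<in> face_vertices F i j. P$3 = fst s * P$1 + snd s * P$2 + c)"

definition det2 :: "real \<times> real \<Rightarrow> real \<times> real \<Rightarrow> real" where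
  "det2 u v = fst u * snd v - snd u * fst v"

definition curvature :: "(nat \<Rightarrow> nat \<Rightarrow> pt) \<Rightarrow> nat \<Rightarrow> nat \<Rightarrow> real" where
  "curvature F i j =
     (let p1 = face_dual_top F (i - 1) (j - 1); p2 = face_dual_top F i (j - 1);
          p3 = face_dual_top F i j; p4 = face_dual_top F (i - 1) j
      in (det2 p1 p2 + det2 p2 p3 + det2 p3 p4 + det2 p4 p1) / 2)"

definition inf_iso_isometric_deformation ::
  "nat \<Rightarrow> nat \<Rightarrow> (nat \<Rightarrow> nat \<Rightarrow> pt) \<Rightarrow> (nat \<Rightarrow> nat \<Rightarrow> pt) \<Rightarrow> bool" where
  "inf_iso_isometric_deformation m n F V \<longleftrightarrow>
     (\<forall>k<m. \<forall>l<n. \<exists>W. inf_iso_congruence W \<and>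
        V k l = W (F k l) \<and> V (Suc k) l = W (F (Suc k) l) \<and>
        V (Suc k) (Suc l) = W (F (Suc k) (Suc l)) \<and> V k (Suc l) = W (F k (Suc l))) \<and>
     (\<forall>i j. 0 < i \<and> i < m \<and> 0 < j \<and> j < n \<longrightarrow>
        ((\<lambda>t. curvature (\<lambda>k l. F k l + t *\<^sub>R V k l) i j) has_real_derivative 0) (at 0))"

definition trivial_deformation ::
  "nat \<Rightarrow> nat \<Rightarrow> (nat \<Rightarrow> nat \<Rightarrow> pt) \<Rightarrow> (nat \<Rightarrow> nat \<Rightarrow> pt) \<Rightarrow> bool" where
  "trivial_deformation m n F V \<longleftrightarrow>
     (\<exists>W. inf_iso_congruence W \<and> (\<forall>i\<le>m. \<forall>j\<le>n. V i j = W (F i j)))"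

definition inf_flexible :: "nat \<Rightarrow> nat \<Rightarrow> (nat \<Rightarrow> nat \<Rightarrow> pt) \<Rightarrow> bool" where
  "inf_flexible m n F \<longleftrightarrow>
     (\<exists>V. inf_iso_isometric_deformation m n F V \<and> \<not> trivial_deformation m n F V)"

definition isotropic_vec :: "pt \<Rightarrow> bool" where
  "isotropic_vec v \<longleftrightarrow> v$1 = 0 \<and> v$2 = 0"

end

theory Submission
  imports Defs
begin

(* Dual-convexity makes every face non-isotropic. A face lies in the plane of a flat angle of an
   admissible 4-hedral angle; were that plane isotropic, it would contain the isotropic line through
   the vertex, while the crossing diagonals put the two other edges of the angle on one side of it,
   so the angle would lie in a closed half-space whose boundary contains that line, and the line
   could not meet its interior. Hence each face is a graph z = s1 x + s2 y + c with a unique slope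
   (s1, s2), the top view of its dual point, and distinct vertices of a face have distinct top views.

   The top view of an infinitesimal isotropic congruence is an infinitesimal plane motion
   U(x, y) = (- phi y + b1, phi x + b2). Neighbouring faces share an edge with distinct top-view
   endpoints, so all face congruences of a deformation V have the same top view U, and V - U is an
   isotropic deformation satisfying the same face conditions, trivial only if V is. As U only sees the
   top view, each face of F + tV is the image of the corresponding face of F + t(V - U) under the
   similarity (x, y, z) -> (x - t phi y + t b1, y + t phi x + t b2, z), which transforms slopes by the
   inverse transpose of a matrix of determinant 1 + t^2 phi^2. Thus the curvature of F + t(V - U) is
   (1 + t^2 phi^2) times that of F + tV, and the vertex condition carries over because this factor
   has derivative 0 at t = 0. *)

section \<open>Non-isotropic planes and slopes\<close>

definition in_isotropic_plane :: "pt set \<Rightarrow> bool" where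
  "in_isotropic_plane S \<longleftrightarrow> (\<exists>a \<gamma>. a \<noteq> 0 \<and> a$3 = 0 \<and> S \<subseteq> {x. a \<bullet> x = \<gamma>})"

definition has_slope :: "pt set \<Rightarrow> real \<times> real \<Rightarrow> bool" where
  "has_slope S s \<longleftrightarrow> (\<exists>c. \<forall>P\<in>S. P$3 = fst s * P$1 + snd s * P$2 + c)"

lemma face_dual_top_eq_the_slope: "face_dual_top F i j = (THE s. has_slope (face_vertices F i j) s)"
  unfolding face_dual_top_def has_slope_def ..

lemma in_isotropic_plane_subset: "S \<subseteq> T \<Longrightarrow> in_isotropic_plane T \<Longrightarrow> in_isotropic_plane S"
  unfolding in_isotropic_plane_def by (meson order_trans)

lemma in_isotropic_plane_affine_hull:
  assumes "in_isotropic_plane S"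
  shows "in_isotropic_plane (affine hull S)"
proof -
  obtain a \<gamma> where a: "a \<noteq> 0" "a$3 = 0" and S: "S \<subseteq> {x. a \<bullet> x = \<gamma>}"
    using assms unfolding in_isotropic_plane_def by blast
  have "affine hull S \<subseteq> {x. a \<bullet> x = \<gamma>}"
    using S by (rule hull_minimal) (rule affine_hyperplane)
  with a show ?thesis
    unfolding in_isotropic_plane_def by auto
qed

lemma has_slope_unique:
  assumes "\<not> in_isotropic_plane S" "has_slope S s" "has_slope S s'"
  shows "s = s'"
proof (rule ccontr)
  assume "s \<noteq> s'"
  obtain c c' where c: "\<forall>P\<in>S. P$3 = fst s * P$1 + snd s * P$2 + c"
    and c': "\<forall>P\<in>S. P$3 = fst s' * P$1 + snd s' * P$2 + c'"
    using assms(2,3) unfolding has_slope_def by blast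
  define a :: pt where "a = vector [fst s - fst s', snd s - snd s', 0]"
  have "a$3 = 0"
    by (simp add: a_def)
  moreover have "a \<noteq> 0"
  proof
    assume "a = 0"
    then have "a$1 = 0" "a$2 = 0"
      by simp_all
    then show False
      using \<open>s \<noteq> s'\<close> by (simp add: a_def prod_eq_iff)
  qed
  moreover have "S \<subseteq> {x. a \<bullet> x = c' - c}"
  proof
    fix P assume "P \<in> S"
    then have "(fst s - fst s') * P$1 + (snd s - snd s') * P$2 = c' - c"
      using c c' by (simp add: algebra_simps)
    then show "P \<in> {x. a \<bullet> x = c' - c}"
      by (simp add: a_def inner_vec_def sum_3)
  qed
  ultimately show False
    using assms(1) unfolding in_isotropic_plane_def by auto
qed

lemma the_slope_eq:
  assumes "\<not> in_isotropic_plane S" "has_slope S s"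
  shows "(THE s. has_slope S s) = s"
  using assms(2) by (rule the_equality) (use assms has_slope_unique in blast)

lemma has_slope_isotropic_diff_imp_eq:
  "has_slope S s \<Longrightarrow> P \<in> S \<Longrightarrow> Q \<in> S \<Longrightarrow> isotropic_vec (P - Q) \<Longrightarrow> P = Q"
  by (auto simp: has_slope_def isotropic_vec_def vec_eq_iff forall_3)

lemma plane_isotropic_or_has_slope:
  assumes "n \<noteq> 0" "S \<subseteq> {x. n \<bullet> x = d}"
  shows "in_isotropic_plane S \<or> (\<exists>s. has_slope S s)"
proof (cases "n$3 = 0")
  case True
  then show ?thesis
    using assms unfolding in_isotropic_plane_def by auto
next
  case False
  have "has_slope S (- n$1 / n$3, - n$2 / n$3)"
    unfolding has_slope_def
  proof (intro exI ballI)
    fix P assume "P \<in> S"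
    then have "n$1 * P$1 + n$2 * P$2 + n$3 * P$3 = d"
      using assms(2) by (auto simp: inner_vec_def sum_3)
    with False show "P$3 = fst (- n$1 / n$3, - n$2 / n$3) * P$1 + snd (- n$1 / n$3, - n$2 / n$3) * P$2 + d / n$3"
      by (simp add: field_simps)
  qed
  then show ?thesis by blast
qed

section \<open>Convex quadrilaterals and admissible 4-hedral angles\<close>

lemma convex_quad_diagonals:
  assumes "convex_quad A B C D"
  obtains u v where "0 < u" "u < 1" "0 < v" "v < 1"
    "(1 - u) *\<^sub>R A + u *\<^sub>R C = (1 - v) *\<^sub>R B + v *\<^sub>R D"
proof -
  obtain X where "X \<in> open_segment A C" "X \<in> open_segment B D"
    using assms unfolding convex_quad_def by blast
  then obtain u v where "0 < u" "u < 1" "X = (1 - u) *\<^sub>R A + u *\<^sub>R C"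
    "0 < v" "v < 1" "X = (1 - v) *\<^sub>R B + v *\<^sub>R D"
    unfolding in_segment by blast
  then show ?thesis
    using that by blast
qed

lemma convex_quad_rotate: "convex_quad A B C D \<Longrightarrow> convex_quad B C D A"
  unfolding convex_quad_def by (metis insert_commute open_segment_commute Int_commute)

lemma convex_quad_adjacent_neq:
  assumes "convex_quad A B C D"
  shows "A \<noteq> B"
proof
  assume "A = B"
  obtain u v where uv: "0 < u" "0 < v" "(1 - u) *\<^sub>R A + u *\<^sub>R C = (1 - v) *\<^sub>R A + v *\<^sub>R D"
    using convex_quad_diagonals[OF assms] \<open>A = B\<close> by metis
  have "v *\<^sub>R D = v *\<^sub>R ((1 - u / v) *\<^sub>R A + (u / v) *\<^sub>R C)"
    using uv by (simp add: algebra_simps)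
  then have "D = (1 - u / v) *\<^sub>R A + (u / v) *\<^sub>R C"
    using uv(2) by simp
  then have "collinear {A, D, C}"
    unfolding collinear_3_expand by (intro disjI2 exI[of _ "1 - u / v"]) simp
  moreover have "{A, B, C, D} = {A, D, C}"
    using \<open>A = B\<close> by auto
  ultimately show False
    using assms unfolding convex_quad_def by argo
qed

lemma convex_quad_in_affine_hull:
  assumes "convex_quad A B C D"
  shows "D \<in> affine hull {A, B, C}"
proof -
  obtain u v where uv: "0 < v" "(1 - u) *\<^sub>R A + u *\<^sub>R C = (1 - v) *\<^sub>R B + v *\<^sub>R D"
    using convex_quad_diagonals[OF assms] by metis
  have vD: "v *\<^sub>R D = (1 - u) *\<^sub>R A + (v - 1) *\<^sub>R B + u *\<^sub>R C"
    using uv(2) by (simp add: algebra_simps)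
  have "D = (1 / v) *\<^sub>R (v *\<^sub>R D)"
    using uv(1) by simp
  also have "\<dots> = ((1 - u) / v) *\<^sub>R A + ((v - 1) / v) *\<^sub>R B + (u / v) *\<^sub>R C"
    unfolding vD by (simp add: scaleR_add_right)
  finally have "D = ((1 - u) / v) *\<^sub>R A + ((v - 1) / v) *\<^sub>R B + (u / v) *\<^sub>R C" .
  moreover have "(1 - u) / v + (v - 1) / v + u / v = 1"
    using uv(1) by (simp add: field_simps)
  ultimately show ?thesis
    unfolding affine_hull_3 by blast
qed

lemma convex_quad_coplanar:
  assumes "convex_quad A B C D"
  obtains n d where "n \<noteq> 0" "{A, B, C, D} \<subseteq> {x. n \<bullet> x = d}"
proof -
  note D = convex_quad_in_affine_hull[OF assms]
  have "\<not> collinear {A, B, C}"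
  proof
    assume "collinear {A, B, C}"
    then have "collinear (affine hull {A, B, C})"
      by (simp add: collinear_affine_hull_collinear)
    moreover have "{A, B, C, D} \<subseteq> affine hull {A, B, C}"
      using D hull_subset by fastforce
    ultimately have "collinear {A, B, C, D}"
      by (rule collinear_subset)
    then show False
      using assms unfolding convex_quad_def by blast
  qed
  define n where "n = cross3 (B - A) (C - A)"
  have "n \<noteq> 0"
    using \<open>\<not> collinear {A, B, C}\<close> unfolding n_def cross_eq_0
    by (simp add: collinear_3[of B A C, symmetric] insert_commute)
  have "n \<bullet> (B - A) = 0" "n \<bullet> (C - A) = 0"
    unfolding n_def by (simp_all add: dot_cross_self inner_commute)
  then have "{A, B, C} \<subseteq> {x. n \<bullet> x = n \<bullet> A}"
    by (auto simp: inner_diff_right)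
  then have "affine hull {A, B, C} \<subseteq> {x. n \<bullet> x = n \<bullet> A}"
    by (rule hull_minimal) (rule affine_hyperplane)
  with D \<open>n \<noteq> 0\<close> \<open>{A, B, C} \<subseteq> _\<close> show ?thesis
    using that by auto
qed

lemma convex_quad_has_slope:
  assumes "convex_quad A B C D" "\<not> in_isotropic_plane {A, B, C, D}"
  shows "\<exists>s. has_slope {A, B, C, D} s"
proof -
  obtain n d where "n \<noteq> 0" "{A, B, C, D} \<subseteq> {x. n \<bullet> x = d}"
    using convex_quad_coplanar[OF assms(1)] .
  then show ?thesis
    using plane_isotropic_or_has_slope assms(2) by blast
qed

lemma inner_e3: "a \<bullet> e3 = a$3"
  by (simp add: e3_def inner_vec_def sum_3)

lemma hedral_angle_subset_halfspace:
  assumes "a \<bullet> Ov = \<gamma>" "{A, B, C, D} \<subseteq> {x. \<gamma> \<le> a \<bullet> x}"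
  shows "hedral_angle Ov A B C D \<subseteq> {x. \<gamma> \<le> a \<bullet> x}"
proof
  fix y assume "y \<in> hedral_angle Ov A B C D"
  then obtain t x where y: "y = Ov + t *\<^sub>R (x - Ov)" "0 \<le> t" "x \<in> convex hull {A, B, C, D}"
    unfolding hedral_angle_def by blast
  have "convex hull {A, B, C, D} \<subseteq> {x. \<gamma> \<le> a \<bullet> x}"
    using assms(2) by (rule hull_minimal) (rule convex_halfspace_ge)
  with y(3) have "0 \<le> t * (a \<bullet> x - \<gamma>)"
    using y(2) by auto
  then show "y \<in> {x. \<gamma> \<le> a \<bullet> x}"
    using assms(1) by (simp add: y(1) inner_add_right inner_diff_right algebra_simps)
qed

lemma admissible_flat_angle_not_isotropic:
  assumes adm: "admissible_convex_4hedral Ov A B C D"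
  shows "\<not> in_isotropic_plane {Ov, A, B}"
proof
  assume "in_isotropic_plane {Ov, A, B}"
  then obtain a \<gamma> where a: "a \<noteq> 0" "a$3 = 0" and plane: "a \<bullet> Ov = \<gamma>" "a \<bullet> A = \<gamma>" "a \<bullet> B = \<gamma>"
    unfolding in_isotropic_plane_def by auto
  obtain u v where uv: "0 < u" "0 < v" "(1 - u) *\<^sub>R A + u *\<^sub>R C = (1 - v) *\<^sub>R B + v *\<^sub>R D"
    using adm convex_quad_diagonals unfolding admissible_convex_4hedral_def by metis
  have "a \<bullet> ((1 - u) *\<^sub>R A + u *\<^sub>R C) = a \<bullet> ((1 - v) *\<^sub>R B + v *\<^sub>R D)"
    using uv(3) by simp
  then have same_side: "u * (a \<bullet> C - \<gamma>) = v * (a \<bullet> D - \<gamma>)"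
    by (simp add: inner_add_right plane algebra_simps)
  have "0 \<le> u * (a \<bullet> C - \<gamma>) \<longleftrightarrow> 0 \<le> v * (a \<bullet> D - \<gamma>)"
    using same_side by simp
  then have same_sign: "\<gamma> \<le> a \<bullet> C \<longleftrightarrow> \<gamma> \<le> a \<bullet> D"
    using uv(1,2) by (simp add: zero_le_mult_iff)
  obtain a' \<gamma>' where a': "a' \<noteq> 0" "a' \<bullet> Ov = \<gamma>'" "a' \<bullet> e3 = 0"
    and halfspace: "{A, B, C, D} \<subseteq> {x. \<gamma>' \<le> a' \<bullet> x}"
  proof (cases "\<gamma> \<le> a \<bullet> C")
    case True
    then show ?thesis
      using that[of a \<gamma>] same_sign a plane by (auto simp: inner_e3)
  next
    case False
    then show ?thesis
      using that[of "- a" "- \<gamma>"] same_sign a plane by (auto simp: inner_e3)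
  qed
  obtain s where "Ov + s *\<^sub>R e3 \<in> interior (hedral_angle Ov A B C D)"
    using adm unfolding admissible_convex_4hedral_def by blast
  then have "Ov + s *\<^sub>R e3 \<in> interior {x. \<gamma>' \<le> a' \<bullet> x}"
    using interior_mono[OF hedral_angle_subset_halfspace[OF a'(2) halfspace]] by blast
  then have "\<gamma>' < a' \<bullet> (Ov + s *\<^sub>R e3)"
    using a'(1) by simp
  then show False
    using a'(2,3) by (simp add: inner_add_right)
qed

lemma admissible_rotate:
  assumes "admissible_convex_4hedral Ov A B C D"
  shows "admissible_convex_4hedral Ov B C D A"
proof -
  have vertices: "{B, C, D, A} = {A, B, C, D}"
    by auto
  then have "hedral_angle Ov B C D A = hedral_angle Ov A B C D"
    unfolding hedral_angle_def by simp
  with vertices show ?thesis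
    using assms convex_quad_rotate unfolding admissible_convex_4hedral_def by auto
qed

lemma admissible_flat_angles_not_isotropic:
  assumes "admissible_convex_4hedral Ov A B C D"
    and "P \<in> {affine hull {Ov, A, B}, affine hull {Ov, B, C}, affine hull {Ov, C, D}, affine hull {Ov, D, A}}"
  shows "\<not> in_isotropic_plane P"
proof -
  have "\<not> in_isotropic_plane (affine hull {Ov, X, Y})" if "admissible_convex_4hedral Ov X Y Z W" for X Y Z W
    using admissible_flat_angle_not_isotropic[OF that] in_isotropic_plane_subset[OF hull_subset] by blast
  then show ?thesis
    using assms admissible_rotate by blast
qed

section \<open>Faces of a dual-convex net\<close>

definition face_corners :: "nat \<Rightarrow> nat \<Rightarrow> (nat \<times> nat) set" where
  "face_corners k l = {(k, l), (Suc k, l), (Suc k, Suc l), (k, Suc l)}"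

lemma face_vertices_cong_image:
  assumes "\<And>i j. (i, j) \<in> face_corners k l \<Longrightarrow> G i j = f (F i j)"
  shows "face_vertices G k l = f ` face_vertices F k l"
  using assms by (simp add: face_vertices_def face_corners_def)

lemma face_corners_cover:
  assumes "i \<le> m" "j \<le> n" "0 < m" "0 < n"
  shows "\<exists>k<m. \<exists>l<n. (i, j) \<in> face_corners k l"
proof (intro exI conjI)
  show "(i, j) \<in> face_corners (min i (m - 1)) (min j (n - 1))"
    using assms by (auto simp: face_corners_def min_def)
qed (use assms in auto)

lemma dual_convex_face_convex_quad:
  "dual_convex m n F \<Longrightarrow> k < m \<Longrightarrow> l < n \<Longrightarrow>
    convex_quad (F k l) (F (Suc k) l) (F (Suc k) (Suc l)) (F k (Suc l))"
  unfolding dual_convex_def is_net_def by blast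

lemma dual_convex_face_not_isotropic:
  assumes dc: "dual_convex m n F" and kl: "k < m" "l < n"
  shows "\<not> in_isotropic_plane (face_vertices F k l)"
proof
  assume isotropic: "in_isotropic_plane (face_vertices F k l)"
  define i where "i = (if Suc k < m then Suc k else k)"
  define j where "j = (if Suc l < n then Suc l else l)"
  \<comment> \<open>a vertex of the face that is not a boundary vertex of the net; it exists because m, n \<ge> 2\<close>
  have "0 < i" "i < m" "0 < j" "j < n"
    using dc kl unfolding dual_convex_def i_def j_def by auto
  then obtain A B C D where adm: "admissible_convex_4hedral (F i j) A B C D"
    and planes: "face_plane F (i - 1) (j - 1) = affine hull {F i j, A, B}"
      "face_plane F i (j - 1) = affine hull {F i j, B, C}"
      "face_plane F i j = affine hull {F i j, C, D}"
      "face_plane F (i - 1) j = affine hull {F i j, D, A}"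
    using dc unfolding dual_convex_def by blast
  have "face_plane F k l \<in>
      {face_plane F (i - 1) (j - 1), face_plane F i (j - 1), face_plane F i j, face_plane F (i - 1) j}"
    unfolding i_def j_def by auto
  then have "\<not> in_isotropic_plane (face_plane F k l)"
    using admissible_flat_angles_not_isotropic[OF adm] unfolding planes by blast
  moreover have "in_isotropic_plane (face_plane F k l)"
    unfolding face_plane_def using isotropic by (rule in_isotropic_plane_affine_hull)
  ultimately show False
    by contradiction
qed

lemma dual_convex_face_has_slope:
  assumes "dual_convex m n F" "k < m" "l < n"
  shows "\<exists>s. has_slope (face_vertices F k l) s"
  using convex_quad_has_slope[OF dual_convex_face_convex_quad[OF assms]]
    dual_convex_face_not_isotropic[OF assms]
  unfolding face_vertices_def by blast

lemma dual_convex_edges_not_isotropic: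
  assumes "dual_convex m n F" "k < m" "l < n"
  shows "\<not> isotropic_vec (F (Suc k) l - F (Suc k) (Suc l))"
    and "\<not> isotropic_vec (F k (Suc l) - F (Suc k) (Suc l))"
proof -
  obtain s where s: "has_slope (face_vertices F k l) s"
    using dual_convex_face_has_slope[OF assms] by blast
  note quad = dual_convex_face_convex_quad[OF assms]
  have "F (Suc k) l \<noteq> F (Suc k) (Suc l)"
    using convex_quad_adjacent_neq[OF convex_quad_rotate[OF quad]] .
  then show "\<not> isotropic_vec (F (Suc k) l - F (Suc k) (Suc l))"
    using has_slope_isotropic_diff_imp_eq[OF s, of "F (Suc k) l" "F (Suc k) (Suc l)"]
    by (auto simp: face_vertices_def)
  have "F (Suc k) (Suc l) \<noteq> F k (Suc l)"
    using convex_quad_adjacent_neq[OF convex_quad_rotate[OF convex_quad_rotate[OF quad]]] .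
  then show "\<not> isotropic_vec (F k (Suc l) - F (Suc k) (Suc l))"
    using has_slope_isotropic_diff_imp_eq[OF s, of "F k (Suc l)" "F (Suc k) (Suc l)"]
    by (auto simp: face_vertices_def)
qed

section \<open>Infinitesimal isotropic congruences and their top views\<close>

definition iso_motion :: "real \<Rightarrow> real \<Rightarrow> real \<Rightarrow> pt \<Rightarrow> pt \<Rightarrow> pt" where
  "iso_motion \<phi> c1 c2 b x = vector [- \<phi> * x$2, \<phi> * x$1, c1 * x$1 + c2 * x$2] + b"

definition horizontal_motion :: "real \<Rightarrow> real \<Rightarrow> real \<Rightarrow> pt \<Rightarrow> pt" where
  "horizontal_motion \<phi> b1 b2 = iso_motion \<phi> 0 0 (vector [b1, b2, 0])"

lemma iso_motion_components [simp]:
  "iso_motion \<phi> c1 c2 b x $ 1 = - \<phi> * x$2 + b$1"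
  "iso_motion \<phi> c1 c2 b x $ 2 = \<phi> * x$1 + b$2"
  "iso_motion \<phi> c1 c2 b x $ 3 = c1 * x$1 + c2 * x$2 + b$3"
  by (simp_all add: iso_motion_def)

lemma horizontal_motion_components [simp]:
  "horizontal_motion \<phi> b1 b2 x $ 1 = - \<phi> * x$2 + b1"
  "horizontal_motion \<phi> b1 b2 x $ 2 = \<phi> * x$1 + b2"
  "horizontal_motion \<phi> b1 b2 x $ 3 = 0"
  by (simp_all add: horizontal_motion_def)

lemma inf_iso_congruence_iff: "inf_iso_congruence W \<longleftrightarrow> (\<exists>\<phi> c1 c2 b. W = iso_motion \<phi> c1 c2 b)"
  unfolding inf_iso_congruence_def iso_motion_def by (simp add: fun_eq_iff)

lemma inf_iso_congruence_horizontal_motion: "inf_iso_congruence (horizontal_motion \<phi> b1 b2)"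
  unfolding inf_iso_congruence_iff horizontal_motion_def by blast

lemma inf_iso_congruence_add_scaled:
  assumes "inf_iso_congruence W" "inf_iso_congruence U"
  shows "inf_iso_congruence (\<lambda>x. W x + c *\<^sub>R U x)"
proof -
  obtain \<phi> c1 c2 b \<psi> d1 d2 e where W: "W = iso_motion \<phi> c1 c2 b" and U: "U = iso_motion \<psi> d1 d2 e"
    using assms unfolding inf_iso_congruence_iff by blast
  have "(\<lambda>x. W x + c *\<^sub>R U x) = iso_motion (\<phi> + c * \<psi>) (c1 + c * d1) (c2 + c * d2) (b + c *\<^sub>R e)"
    unfolding W U by (simp add: fun_eq_iff vec_eq_iff forall_3 algebra_simps)
  then show ?thesis
    unfolding inf_iso_congruence_iff by blast
qed

lemma inf_iso_congruence_horizontal_part: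
  assumes "inf_iso_congruence W"
  obtains \<phi> b1 b2 where "\<And>x. isotropic_vec (W x - horizontal_motion \<phi> b1 b2 x)"
proof -
  obtain \<phi> c1 c2 b where "W = iso_motion \<phi> c1 c2 b"
    using assms unfolding inf_iso_congruence_iff by blast
  then have "isotropic_vec (W x - horizontal_motion \<phi> (b$1) (b$2) x)" for x
    by (simp add: isotropic_vec_def)
  then show ?thesis
    using that by blast
qed

lemma horizontal_motion_unique:
  assumes "isotropic_vec (X - horizontal_motion \<phi> b1 b2 P)" "isotropic_vec (X - horizontal_motion \<phi>' b1' b2' P)"
    and "isotropic_vec (Y - horizontal_motion \<phi> b1 b2 Q)" "isotropic_vec (Y - horizontal_motion \<phi>' b1' b2' Q)"
    and "\<not> isotropic_vec (P - Q)"
  shows "(\<phi>, b1, b2) = (\<phi>', b1', b2')"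
proof -
  have "(\<phi> - \<phi>') * (P$2 - Q$2) = 0" "(\<phi> - \<phi>') * (P$1 - Q$1) = 0"
    using assms(1-4) by (auto simp: isotropic_vec_def algebra_simps)
  then have "\<phi> = \<phi>'"
    using assms(5) by (auto simp: isotropic_vec_def)
  then show ?thesis
    using assms(1,2) by (simp add: isotropic_vec_def)
qed

lemma grid_common_witness:
  assumes "0 < m" "0 < n"
    and ex: "\<And>k l. k < m \<Longrightarrow> l < n \<Longrightarrow> \<exists>p. P k l p"
    and step_row: "\<And>k l p p'. Suc k < m \<Longrightarrow> l < n \<Longrightarrow> P k l p \<Longrightarrow> P (Suc k) l p' \<Longrightarrow> p = p'"
    and step_col: "\<And>k l p p'. k < m \<Longrightarrow> Suc l < n \<Longrightarrow> P k l p \<Longrightarrow> P k (Suc l) p' \<Longrightarrow> p = p'"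
  obtains p where "\<And>k l. k < m \<Longrightarrow> l < n \<Longrightarrow> P k l p"
proof -
  define q where "q k l = (SOME p. P k l p)" for k l
  have q: "P k l (q k l)" if "k < m" "l < n" for k l
    unfolding q_def using ex[OF that] by (rule someI_ex)
  have col: "q 0 l = q 0 0" if "l < n" for l
    using that
  proof (induction l)
    case (Suc l)
    then have "q 0 l = q 0 (Suc l)"
      using step_col[OF assms(1) Suc.prems q q] assms(1) by simp
    with Suc show ?case
      by simp
  qed simp
  have all: "q k l = q 0 0" if "k < m" "l < n" for k l
    using that
  proof (induction k)
    case (Suc k)
    then have "q k l = q (Suc k) l"
      using step_row[OF Suc.prems q q] by simp
    with Suc show ?case
      by simp
  qed (use col in blast)
  show ?thesis
  proof (rule that)
    fix k l assume "k < m" "l < n"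
    then show "P k l (q 0 0)"
      using q[of k l] all[of k l] by simp
  qed
qed

lemma inf_iso_isometric_deformation_face:
  assumes "inf_iso_isometric_deformation m n F V" "k < m" "l < n"
  obtains W where "inf_iso_congruence W" "\<And>i j. (i, j) \<in> face_corners k l \<Longrightarrow> V i j = W (F i j)"
  using assms unfolding inf_iso_isometric_deformation_def face_corners_def by blast

definition face_top_motion ::
    "(nat \<Rightarrow> nat \<Rightarrow> pt) \<Rightarrow> (nat \<Rightarrow> nat \<Rightarrow> pt) \<Rightarrow> nat \<Rightarrow> nat \<Rightarrow> real \<times> real \<times> real \<Rightarrow> bool" where
  "face_top_motion F V k l p \<longleftrightarrow> (case p of (\<phi>, b1, b2) \<Rightarrow>
     \<forall>(i, j) \<in> face_corners k l. isotropic_vec (V i j - horizontal_motion \<phi> b1 b2 (F i j)))"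

lemma face_top_motion_exists:
  assumes "inf_iso_isometric_deformation m n F V" "k < m" "l < n"
  shows "\<exists>p. face_top_motion F V k l p"
proof -
  obtain W where W: "inf_iso_congruence W" "\<And>i j. (i, j) \<in> face_corners k l \<Longrightarrow> V i j = W (F i j)"
    using inf_iso_isometric_deformation_face[OF assms] by blast
  obtain \<phi> b1 b2 where "\<And>x. isotropic_vec (W x - horizontal_motion \<phi> b1 b2 x)"
    using inf_iso_congruence_horizontal_part[OF W(1)] by blast
  then have "face_top_motion F V k l (\<phi>, b1, b2)"
    unfolding face_top_motion_def using W(2) by auto
  then show ?thesis ..
qed

lemma face_top_motion_unique:
  assumes "face_top_motion F V k l p" "face_top_motion F V k' l' p'"
    and "(i, j) \<in> face_corners k l \<inter> face_corners k' l'" "(i', j') \<in> face_corners k l \<inter> face_corners k' l'"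
    and "\<not> isotropic_vec (F i j - F i' j')"
  shows "p = p'"
proof -
  obtain \<phi> b1 b2 \<phi>' b1' b2' where p: "p = (\<phi>, b1, b2)" "p' = (\<phi>', b1', b2')"
    using prod_cases3 by metis
  show ?thesis
    unfolding p by (rule horizontal_motion_unique[OF _ _ _ _ assms(5)])
      (use assms(1-4) in \<open>auto simp: face_top_motion_def p\<close>)
qed

lemma deformation_horizontal_motion:
  assumes dc: "dual_convex m n F" and V: "inf_iso_isometric_deformation m n F V"
  obtains \<phi> b1 b2 where "\<And>i j. i \<le> m \<Longrightarrow> j \<le> n \<Longrightarrow> isotropic_vec (V i j - horizontal_motion \<phi> b1 b2 (F i j))"
proof -
  have mn: "0 < m" "0 < n"
    using dc unfolding dual_convex_def by auto
  have row: "p = p'"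
    if "Suc k < m" "l < n" "face_top_motion F V k l p" "face_top_motion F V (Suc k) l p'" for k l p p'
    using that dual_convex_edges_not_isotropic(1)[OF dc, of k l]
    by (intro face_top_motion_unique[of F V k l p "Suc k" l p' "Suc k" l "Suc k" "Suc l"])
      (auto simp: face_corners_def)
  have col: "p = p'"
    if "k < m" "Suc l < n" "face_top_motion F V k l p" "face_top_motion F V k (Suc l) p'" for k l p p'
    using that dual_convex_edges_not_isotropic(2)[OF dc, of k l]
    by (intro face_top_motion_unique[of F V k l p k "Suc l" p' k "Suc l" "Suc k" "Suc l"])
      (auto simp: face_corners_def)
  obtain p where p: "\<And>k l. k < m \<Longrightarrow> l < n \<Longrightarrow> face_top_motion F V k l p"
    by (rule grid_common_witness[OF mn, of "face_top_motion F V"])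
      (use face_top_motion_exists[OF V] row col in blast)+
  obtain \<phi> b1 b2 where "p = (\<phi>, b1, b2)"
    by (cases p) auto
  have "isotropic_vec (V i j - horizontal_motion \<phi> b1 b2 (F i j))" if "i \<le> m" "j \<le> n" for i j
    using face_corners_cover[OF that mn] p \<open>p = _\<close> unfolding face_top_motion_def by fastforce
  then show ?thesis
    using that by blast
qed

section \<open>Slopes and curvature under isotropic motions\<close>

(* The inverse transpose of the top view (x, y) \<mapsto> (x - \<psi> y, y + \<psi> x) of x + iso_motion \<psi> c1 c2 b x. *)
definition motion_slope :: "real \<Rightarrow> real \<times> real \<Rightarrow> real \<times> real" where
  "motion_slope \<psi> s = ((fst s - \<psi> * snd s) / (1 + \<psi>\<^sup>2), (\<psi> * fst s + snd s) / (1 + \<psi>\<^sup>2))"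

lemma one_plus_square_pos: "0 < 1 + (\<psi>::real)\<^sup>2"
  by (simp add: add_pos_nonneg)

lemma motion_slope_0 [simp]: "motion_slope 0 s = s"
  by (simp add: motion_slope_def)

lemma det2_motion_slope: "det2 (motion_slope \<psi> x) (motion_slope \<psi> y) = det2 x y / (1 + \<psi>\<^sup>2)"
proof -
  define A where "A = (fst x - \<psi> * snd x) * (\<psi> * fst y + snd y)"
  define B where "B = (\<psi> * fst x + snd x) * (fst y - \<psi> * snd y)"
  have "det2 (motion_slope \<psi> x) (motion_slope \<psi> y) = A / ((1 + \<psi>\<^sup>2) * (1 + \<psi>\<^sup>2)) - B / ((1 + \<psi>\<^sup>2) * (1 + \<psi>\<^sup>2))"
    unfolding motion_slope_def det2_def A_def B_def fst_conv snd_conv by (simp only: times_divide_times_eq)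
  also have "\<dots> = (A - B) / ((1 + \<psi>\<^sup>2) * (1 + \<psi>\<^sup>2))"
    by (rule diff_divide_distrib[symmetric])
  also have "A - B = det2 x y * (1 + \<psi>\<^sup>2)"
    unfolding A_def B_def det2_def by (simp add: algebra_simps power2_eq_square)
  finally show ?thesis
    using one_plus_square_pos[of \<psi>] by simp
qed

lemma motion_slope_inverse:
  "fst (motion_slope \<psi> r) + \<psi> * snd (motion_slope \<psi> r) = fst r"
  "snd (motion_slope \<psi> r) - \<psi> * fst (motion_slope \<psi> r) = snd r"
proof -
  define D where "D = 1 + \<psi>\<^sup>2"
  have "D \<noteq> 0"
    using one_plus_square_pos[of \<psi>] unfolding D_def by linarith
  moreover have "motion_slope \<psi> r = ((fst r - \<psi> * snd r) / D, (\<psi> * fst r + snd r) / D)"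
    unfolding motion_slope_def D_def ..
  ultimately show "fst (motion_slope \<psi> r) + \<psi> * snd (motion_slope \<psi> r) = fst r"
    "snd (motion_slope \<psi> r) - \<psi> * fst (motion_slope \<psi> r) = snd r"
    by (simp_all add: field_simps) (simp_all add: D_def algebra_simps power2_eq_square)
qed

lemma has_slope_iso_motion_image:
  assumes "has_slope S s"
  shows "has_slope ((\<lambda>x. x + iso_motion \<psi> c1 c2 b x) ` S) (motion_slope \<psi> (fst s + c1, snd s + c2))"
proof -
  obtain c where c: "\<forall>P\<in>S. P$3 = fst s * P$1 + snd s * P$2 + c"
    using assms unfolding has_slope_def by blast
  define R where "R = motion_slope \<psi> (fst s + c1, snd s + c2)"
  have R: "fst R + \<psi> * snd R = fst s + c1" "snd R - \<psi> * fst R = snd s + c2"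
    unfolding R_def motion_slope_inverse by simp_all
  show ?thesis
    unfolding has_slope_def R_def[symmetric]
  proof (intro exI ballI)
    fix Y assume "Y \<in> (\<lambda>x. x + iso_motion \<psi> c1 c2 b x) ` S"
    then obtain P where P: "P \<in> S" and Y: "Y = P + iso_motion \<psi> c1 c2 b P"
      by blast
    have "fst R * Y$1 + snd R * Y$2
        = (fst R + \<psi> * snd R) * P$1 + (snd R - \<psi> * fst R) * P$2 + fst R * b$1 + snd R * b$2"
      by (simp add: Y algebra_simps)
    also have "\<dots> = (fst s + c1) * P$1 + (snd s + c2) * P$2 + fst R * b$1 + snd R * b$2"
      unfolding R ..
    finally show "Y$3 = fst R * Y$1 + snd R * Y$2 + (c + b$3 - fst R * b$1 - snd R * b$2)"
      using c P by (simp add: Y algebra_simps)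
  qed
qed

lemma in_isotropic_plane_iso_motion_image:
  assumes "in_isotropic_plane ((\<lambda>x. x + iso_motion \<psi> c1 c2 b x) ` S)"
  shows "in_isotropic_plane S"
proof -
  obtain a \<gamma> where a: "a \<noteq> 0" "a$3 = 0"
    and image: "(\<lambda>x. x + iso_motion \<psi> c1 c2 b x) ` S \<subseteq> {x. a \<bullet> x = \<gamma>}"
    using assms unfolding in_isotropic_plane_def by auto
  have inner_a: "a \<bullet> x = a$1 * x$1 + a$2 * x$2" for x
    using a(2) by (simp only: inner_vec_def sum_3) simp
  define a' :: pt where "a' = vector [a$1 + \<psi> * a$2, a$2 - \<psi> * a$1, 0]"
  have "a' \<noteq> 0"
  proof
    assume "a' = 0"
    then have "a'$1 = 0" "a'$2 = 0"
      by simp_all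
    then have "a$1 + \<psi> * a$2 = 0" "a$2 - \<psi> * a$1 = 0"
      unfolding a'_def by (simp_all only: vector_3)
    then have "a$1 * (1 + \<psi>\<^sup>2) = 0"
      by (simp add: algebra_simps power2_eq_square)
    then have "a$1 = 0" "a$2 = 0"
      using one_plus_square_pos[of \<psi>] \<open>a$2 - \<psi> * a$1 = 0\<close> by simp_all
    with a show False
      by (simp add: vec_eq_iff forall_3)
  qed
  moreover have "S \<subseteq> {x. a' \<bullet> x = \<gamma> - a$1 * b$1 - a$2 * b$2}"
  proof
    fix P assume "P \<in> S"
    then have "a \<bullet> (P + iso_motion \<psi> c1 c2 b P) = \<gamma>"
      using image by blast
    then show "P \<in> {x. a' \<bullet> x = \<gamma> - a$1 * b$1 - a$2 * b$2}"
      unfolding inner_a by (simp add: a'_def inner_vec_def sum_3 algebra_simps)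
  qed
  moreover have "a'$3 = 0"
    by (simp add: a'_def)
  ultimately show ?thesis
    unfolding in_isotropic_plane_def by auto
qed

lemma subtract_horizontal_motion_point:
  fixes t :: real
  assumes X: "X = iso_motion \<psi> c1 c2 b P" and iso: "isotropic_vec (X - horizontal_motion \<phi> b1 b2 P)"
  defines "P' \<equiv> P + t *\<^sub>R (X - horizontal_motion \<phi> b1 b2 P)"
  shows "P' = P + iso_motion 0 (t * c1) (t * c2) (vector [0, 0, t * b$3]) P"
    and "P + t *\<^sub>R X = P' + iso_motion (t * \<phi>) 0 0 (vector [t * b1, t * b2, 0]) P'"
proof -
  have isotropic_part: "X - horizontal_motion \<phi> b1 b2 P = vector [0, 0, c1 * P$1 + c2 * P$2 + b$3]"
    using X iso by (simp add: isotropic_vec_def vec_eq_iff forall_3)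
  show "P' = P + iso_motion 0 (t * c1) (t * c2) (vector [0, 0, t * b$3]) P"
    unfolding P'_def isotropic_part by (simp add: vec_eq_iff forall_3 algebra_simps)
  have "P + t *\<^sub>R X = P' + t *\<^sub>R horizontal_motion \<phi> b1 b2 P"
    unfolding P'_def by (simp add: algebra_simps)
  also have "\<dots> = P' + iso_motion (t * \<phi>) 0 0 (vector [t * b1, t * b2, 0]) P'"
    unfolding P'_def isotropic_part by (simp add: vec_eq_iff forall_3 algebra_simps)
  finally show "P + t *\<^sub>R X = P' + iso_motion (t * \<phi>) 0 0 (vector [t * b1, t * b2, 0]) P'" .
qed

lemma face_dual_top_subtract_horizontal_motion:
  assumes dc: "dual_convex m n F" and kl: "k < m" "l < n"
    and W: "inf_iso_congruence W" "\<And>i j. (i, j) \<in> face_corners k l \<Longrightarrow> V i j = W (F i j)"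
    and iso: "\<And>i j. (i, j) \<in> face_corners k l \<Longrightarrow> isotropic_vec (V i j - horizontal_motion \<phi> b1 b2 (F i j))"
  shows "face_dual_top (\<lambda>i j. F i j + t *\<^sub>R V i j) k l
       = motion_slope (t * \<phi>) (face_dual_top (\<lambda>i j. F i j + t *\<^sub>R (V i j - horizontal_motion \<phi> b1 b2 (F i j))) k l)"
proof -
  obtain \<psi> c1 c2 b where "W = iso_motion \<psi> c1 c2 b"
    using W(1) unfolding inf_iso_congruence_iff by blast
  define G where "G i j = F i j + t *\<^sub>R V i j" for i j
  define G' where "G' i j = F i j + t *\<^sub>R (V i j - horizontal_motion \<phi> b1 b2 (F i j))" for i j
  define shear where "shear x = x + iso_motion 0 (t * c1) (t * c2) (vector [0, 0, t * b$3]) x" for x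
  define turn where "turn x = x + iso_motion (t * \<phi>) 0 0 (vector [t * b1, t * b2, 0]) x" for x
  have corner: "G' i j = shear (F i j)" "G i j = turn (G' i j)" if "(i, j) \<in> face_corners k l" for i j
  proof -
    have "V i j = iso_motion \<psi> c1 c2 b (F i j)"
      using W(2)[OF that] \<open>W = _\<close> by simp
    then show "G' i j = shear (F i j)" "G i j = turn (G' i j)"
      unfolding G_def G'_def shear_def turn_def by (rule subtract_horizontal_motion_point[OF _ iso[OF that]])+
  qed
  have vertices': "face_vertices G' k l = shear ` face_vertices F k l"
    using corner(1) by (rule face_vertices_cong_image)
  have vertices: "face_vertices G k l = turn ` face_vertices G' k l"
    using corner(2) by (rule face_vertices_cong_image)
  obtain s where s: "has_slope (face_vertices F k l) s"
    using dual_convex_face_has_slope[OF dc kl] by blast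
  define s' where "s' = (fst s + t * c1, snd s + t * c2)"
  have slope': "has_slope (face_vertices G' k l) s'"
    using has_slope_iso_motion_image[OF s, of 0 "t * c1" "t * c2"]
    unfolding vertices' shear_def s'_def by simp
  have nonisotropic': "\<not> in_isotropic_plane (face_vertices G' k l)"
    using dual_convex_face_not_isotropic[OF dc kl] in_isotropic_plane_iso_motion_image
    unfolding vertices' shear_def by blast
  have slope: "has_slope (face_vertices G k l) (motion_slope (t * \<phi>) s')"
    using has_slope_iso_motion_image[OF slope', of "t * \<phi>" 0 0]
    unfolding vertices turn_def by simp
  have nonisotropic: "\<not> in_isotropic_plane (face_vertices G k l)"
    using nonisotropic' in_isotropic_plane_iso_motion_image
    unfolding vertices turn_def by blast
  show ?thesis
    using the_slope_eq[OF nonisotropic slope] the_slope_eq[OF nonisotropic' slope']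
    unfolding face_dual_top_eq_the_slope G_def[symmetric] G'_def[symmetric] by simp
qed

lemma curvature_subtract_horizontal_motion:
  assumes dc: "dual_convex m n F" and V: "inf_iso_isometric_deformation m n F V"
    and iso: "\<And>i j. i \<le> m \<Longrightarrow> j \<le> n \<Longrightarrow> isotropic_vec (V i j - horizontal_motion \<phi> b1 b2 (F i j))"
    and ij: "0 < i" "i < m" "0 < j" "j < n"
  shows "curvature (\<lambda>k l. F k l + t *\<^sub>R (V k l - horizontal_motion \<phi> b1 b2 (F k l))) i j
       = (1 + (t * \<phi>)\<^sup>2) * curvature (\<lambda>k l. F k l + t *\<^sub>R V k l) i j"
proof -
  have face: "face_dual_top (\<lambda>k l. F k l + t *\<^sub>R V k l) k l
      = motion_slope (t * \<phi>) (face_dual_top (\<lambda>k l. F k l + t *\<^sub>R (V k l - horizontal_motion \<phi> b1 b2 (F k l))) k l)"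
    if kl: "k < m" "l < n" for k l
  proof -
    obtain W where "inf_iso_congruence W" "\<And>i j. (i, j) \<in> face_corners k l \<Longrightarrow> V i j = W (F i j)"
      using inf_iso_isometric_deformation_face[OF V kl] by blast
    moreover have "isotropic_vec (V i j - horizontal_motion \<phi> b1 b2 (F i j))"
      if "(i, j) \<in> face_corners k l" for i j
      using that kl iso by (auto simp: face_corners_def)
    ultimately show ?thesis
      using face_dual_top_subtract_horizontal_motion[OF dc kl] by blast
  qed
  define D where "D = 1 + (t * \<phi>)\<^sup>2"
  have "D \<noteq> 0"
    using one_plus_square_pos[of "t * \<phi>"] unfolding D_def by linarith
  have "i - 1 < m" "j - 1 < n"
    using ij by auto
  then show ?thesis
    unfolding curvature_def Let_def face[OF \<open>i - 1 < m\<close> \<open>j - 1 < n\<close>] face[OF \<open>i - 1 < m\<close> ij(4)]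
      face[OF ij(2) \<open>j - 1 < n\<close>] face[OF ij(2,4)] det2_motion_slope D_def[symmetric]
    using \<open>D \<noteq> 0\<close> by (simp add: field_simps)
qed

lemma inf_iso_isometric_deformation_subtract_congruence:
  assumes V: "inf_iso_isometric_deformation m n F V" and U: "inf_iso_congruence U"
    and vertex: "\<And>i j. 0 < i \<Longrightarrow> i < m \<Longrightarrow> 0 < j \<Longrightarrow> j < n \<Longrightarrow>
      ((\<lambda>t. curvature (\<lambda>k l. F k l + t *\<^sub>R (V k l - U (F k l))) i j) has_real_derivative 0) (at 0)"
  shows "inf_iso_isometric_deformation m n F (\<lambda>i j. V i j - U (F i j))"
  unfolding inf_iso_isometric_deformation_def
proof (intro conjI allI impI)
  fix k l assume kl: "k < m" "l < n"
  obtain W where W: "inf_iso_congruence W" "\<And>i j. (i, j) \<in> face_corners k l \<Longrightarrow> V i j = W (F i j)"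
    using inf_iso_isometric_deformation_face[OF V kl] by blast
  have "inf_iso_congruence (\<lambda>x. W x + (- 1) *\<^sub>R U x)"
    using inf_iso_congruence_add_scaled[OF W(1) U] .
  then show "\<exists>W. inf_iso_congruence W \<and>
      V k l - U (F k l) = W (F k l) \<and> V (Suc k) l - U (F (Suc k) l) = W (F (Suc k) l) \<and>
      V (Suc k) (Suc l) - U (F (Suc k) (Suc l)) = W (F (Suc k) (Suc l)) \<and>
      V k (Suc l) - U (F k (Suc l)) = W (F k (Suc l))"
    using W(2) by (intro exI[of _ "\<lambda>x. W x + (- 1) *\<^sub>R U x"]) (simp add: face_corners_def)
qed (use vertex in blast)

lemma trivial_deformation_subtract_congruence:
  assumes "trivial_deformation m n F (\<lambda>i j. V i j - U (F i j))" and U: "inf_iso_congruence U"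
  shows "trivial_deformation m n F V"
proof -
  obtain W where W: "inf_iso_congruence W" "\<forall>i\<le>m. \<forall>j\<le>n. V i j - U (F i j) = W (F i j)"
    using assms(1) unfolding trivial_deformation_def by blast
  then have "\<forall>i\<le>m. \<forall>j\<le>n. V i j = W (F i j) + 1 *\<^sub>R U (F i j)"
    by (simp add: algebra_simps)
  with inf_iso_congruence_add_scaled[OF W(1) U] show ?thesis
    unfolding trivial_deformation_def by blast
qed

lemma inf_iso_isometric_deformation_subtract_horizontal_motion:
  assumes dc: "dual_convex m n F" and V: "inf_iso_isometric_deformation m n F V"
    and iso: "\<And>i j. i \<le> m \<Longrightarrow> j \<le> n \<Longrightarrow> isotropic_vec (V i j - horizontal_motion \<phi> b1 b2 (F i j))"
  shows "inf_iso_isometric_deformation m n F (\<lambda>i j. V i j - horizontal_motion \<phi> b1 b2 (F i j))"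
  using V inf_iso_congruence_horizontal_motion
proof (rule inf_iso_isometric_deformation_subtract_congruence)
  fix i j assume ij: "0 < i" "i < m" "0 < j" "j < n"
  have "((\<lambda>t. curvature (\<lambda>k l. F k l + t *\<^sub>R V k l) i j) has_real_derivative 0) (at 0)"
    using V ij unfolding inf_iso_isometric_deformation_def by blast
  then have "((\<lambda>t. (1 + (t * \<phi>)\<^sup>2) * curvature (\<lambda>k l. F k l + t *\<^sub>R V k l) i j) has_real_derivative 0) (at 0)"
    by (auto intro!: derivative_eq_intros)
  then show "((\<lambda>t. curvature (\<lambda>k l. F k l + t *\<^sub>R (V k l - horizontal_motion \<phi> b1 b2 (F k l))) i j)
      has_real_derivative 0) (at 0)"
    by (simp only: curvature_subtract_horizontal_motion[OF dc V iso ij])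
qed

theorem lemma3:
  fixes m n :: nat and F :: "nat \<Rightarrow> nat \<Rightarrow> real ^ 3"
  assumes "dual_convex m n F"
    and "inf_flexible m n F"
  shows "\<exists>V. inf_iso_isometric_deformation m n F V \<and> \<not> trivial_deformation m n F V \<and>
             (\<forall>i\<le>m. \<forall>j\<le>n. isotropic_vec (V i j))"
proof -
  obtain V where V: "inf_iso_isometric_deformation m n F V" and nontrivial: "\<not> trivial_deformation m n F V"
    using assms(2) unfolding inf_flexible_def by blast
  obtain \<phi> b1 b2 where iso: "\<And>i j. i \<le> m \<Longrightarrow> j \<le> n \<Longrightarrow> isotropic_vec (V i j - horizontal_motion \<phi> b1 b2 (F i j))"
    using deformation_horizontal_motion[OF assms(1) V] by blast
  let ?V' = "\<lambda>i j. V i j - horizontal_motion \<phi> b1 b2 (F i j)"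
  have "inf_iso_isometric_deformation m n F ?V'"
    using inf_iso_isometric_deformation_subtract_horizontal_motion[OF assms(1) V iso] .
  moreover have "\<not> trivial_deformation m n F ?V'"
    using nontrivial trivial_deformation_subtract_congruence[OF _ inf_iso_congruence_horizontal_motion] by blast
  ultimately show ?thesis
    using iso by blast
qed

end
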